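(* Let $A$ be a fuzzy ideal of a fuzzy Riesz space $(E,\mu)$ and let $T:E\rightarrow E/A$, $Tf=[f]$, be the canonical projection, where $E/A$ carries the fuzzy order $\nu$ described in the context. Then $T$ is a fuzzy Riesz homomorphism.
   Context: A fuzzy order on a real vector space $E$ is a map $\mu:E\times E\to[0,1]$ with $\mu(x,x)=1$; $\mu(x,y)+\mu(y,x)>1$ implies $x=y$; and $\mu(x,z)\ge\sup_{y}\min(\mu(x,y),\mu(y,z))$. Write $x\le y$ for $\mu(x,y)>\frac12$; suprema/infima are taken with respect to this relation. $(E,\mu)$ is a fuzzy ordered linear space if $\mu(x_1,x_2)>\frac12$ implies $\mu(x_1,x_2)\le\mu(x_1+x,x_2+x)$ for all $x$ and $\mu(x_1,x_2)\le\mu(\alpha x_1,\alpha x_2)$ for all $\alpha>0$; it is a fuzzy Riesz space if $x\vee y=\sup\{x,y\}$ and $x\wedge y=\inf\{x,y\}$ exist for all $x,y$. $|x|=x\vee(-x)$. A fuzzy ideal is a vector subspace $A$ such that $\mu(|x|,|y|)>\frac12$ and $y\in A$ imply $x\in A$. For $f\in E$, $[f]=f+A$, $E/A$ is the quotient vector space, and $\nu([f],[g])=1$ if $[f]=[g]$; $\nu([f],[g])=\frac23$ if $[f]\ne[g]$ and there exist $f_1\in[f]$, $g_1\in[g]$ with $\mu(f_1,g_1)>\frac12$; $\nu([f],[g])=0$ otherwise. $(E/A,\nu)$ is a fuzzy Riesz space. A fuzzy Riesz homomorphism is a linear map with $T(x\vee y)=Tx\vee Ty$. *)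

theory Defs
  imports Main "HOL.Real_Vector_Spaces"
begin

definition fuzzy_order_on :: "'b set \<Rightarrow> ('b \<Rightarrow> 'b \<Rightarrow> real) \<Rightarrow> bool" where
  "fuzzy_order_on S \<mu> \<longleftrightarrow>
     (\<forall>x\<in>S. \<forall>y\<in>S. 0 \<le> \<mu> x y \<and> \<mu> x y \<le> 1) \<and>
     (\<forall>x\<in>S. \<mu> x x = 1) \<and>
     (\<forall>x\<in>S. \<forall>y\<in>S. \<mu> x y + \<mu> y x > 1 \<longrightarrow> x = y) \<and>
     (\<forall>x\<in>S. \<forall>z\<in>S. \<forall>y\<in>S. min (\<mu> x y) (\<mu> y z) \<le> \<mu> x z)"

definition fle :: "('b \<Rightarrow> 'b \<Rightarrow> real) \<Rightarrow> 'b \<Rightarrow> 'b \<Rightarrow> bool" where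
  "fle \<mu> x y \<longleftrightarrow> \<mu> x y > 1/2"

definition is_fsup_on :: "'b set \<Rightarrow> ('b \<Rightarrow> 'b \<Rightarrow> real) \<Rightarrow> 'b set \<Rightarrow> 'b \<Rightarrow> bool" where
  "is_fsup_on S \<mu> X s \<longleftrightarrow> s \<in> S \<and> (\<forall>x\<in>X. fle \<mu> x s) \<and>
     (\<forall>u\<in>S. (\<forall>x\<in>X. fle \<mu> x u) \<longrightarrow> fle \<mu> s u)"

definition is_finf_on :: "'b set \<Rightarrow> ('b \<Rightarrow> 'b \<Rightarrow> real) \<Rightarrow> 'b set \<Rightarrow> 'b \<Rightarrow> bool" where
  "is_finf_on S \<mu> X s \<longleftrightarrow> s \<in> S \<and> (\<forall>x\<in>X. fle \<mu> s x) \<and>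
     (\<forall>u\<in>S. (\<forall>x\<in>X. fle \<mu> u x) \<longrightarrow> fle \<mu> u s)"

definition fsup :: "('a \<Rightarrow> 'a \<Rightarrow> real) \<Rightarrow> 'a \<Rightarrow> 'a \<Rightarrow> 'a" where
  "fsup \<mu> x y = (THE s. is_fsup_on UNIV \<mu> {x, y} s)"

definition finf :: "('a \<Rightarrow> 'a \<Rightarrow> real) \<Rightarrow> 'a \<Rightarrow> 'a \<Rightarrow> 'a" where
  "finf \<mu> x y = (THE s. is_finf_on UNIV \<mu> {x, y} s)"

definition fabs :: "('a::real_vector \<Rightarrow> 'a \<Rightarrow> real) \<Rightarrow> 'a \<Rightarrow> 'a" where
  "fabs \<mu> x = fsup \<mu> x (- x)"

definition fuzzy_ordered_linear_space :: "('a::real_vector \<Rightarrow> 'a \<Rightarrow> real) \<Rightarrow> bool" where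
  "fuzzy_ordered_linear_space \<mu> \<longleftrightarrow> fuzzy_order_on UNIV \<mu> \<and>
     (\<forall>x1 x2. \<mu> x1 x2 > 1/2 \<longrightarrow>
        (\<forall>x. \<mu> x1 x2 \<le> \<mu> (x1 + x) (x2 + x)) \<and>
        (\<forall>\<alpha>::real. \<alpha> > 0 \<longrightarrow> \<mu> x1 x2 \<le> \<mu> (\<alpha> *\<^sub>R x1) (\<alpha> *\<^sub>R x2)))"

definition fuzzy_riesz_space :: "('a::real_vector \<Rightarrow> 'a \<Rightarrow> real) \<Rightarrow> bool" where
  "fuzzy_riesz_space \<mu> \<longleftrightarrow> fuzzy_ordered_linear_space \<mu> \<and>
     (\<forall>x y. \<exists>s. is_fsup_on UNIV \<mu> {x, y} s) \<and>
     (\<forall>x y. \<exists>s. is_finf_on UNIV \<mu> {x, y} s)"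

definition fuzzy_ideal :: "('a::real_vector \<Rightarrow> 'a \<Rightarrow> real) \<Rightarrow> 'a set \<Rightarrow> bool" where
  "fuzzy_ideal \<mu> A \<longleftrightarrow> subspace A \<and>
     (\<forall>x y. \<mu> (fabs \<mu> x) (fabs \<mu> y) > 1/2 \<and> y \<in> A \<longrightarrow> x \<in> A)"

definition coset :: "'a::real_vector set \<Rightarrow> 'a \<Rightarrow> 'a set" where
  "coset A f = (\<lambda>a. f + a) ` A"

definition quot :: "'a::real_vector set \<Rightarrow> 'a set set" where
  "quot A = range (coset A)"

definition rep :: "'a set \<Rightarrow> 'a" where
  "rep X = (SOME f. f \<in> X)"

definition qadd :: "'a::real_vector set \<Rightarrow> 'a set \<Rightarrow> 'a set \<Rightarrow> 'a set" where
  "qadd A X Y = coset A (rep X + rep Y)"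

definition qscale :: "'a::real_vector set \<Rightarrow> real \<Rightarrow> 'a set \<Rightarrow> 'a set" where
  "qscale A c X = coset A (c *\<^sub>R rep X)"

definition quot_nu :: "('a::real_vector \<Rightarrow> 'a \<Rightarrow> real) \<Rightarrow> 'a set \<Rightarrow> 'a set \<Rightarrow> 'a set \<Rightarrow> real" where
  "quot_nu \<mu> A X Y =
     (if X = Y then 1
      else if \<exists>f1\<in>X. \<exists>g1\<in>Y. \<mu> f1 g1 > 1/2 then 2/3 else 0)"

definition quot_fuzzy_riesz_hom ::
  "('a::real_vector \<Rightarrow> 'a \<Rightarrow> real) \<Rightarrow> 'a set \<Rightarrow> ('a \<Rightarrow> 'a set) \<Rightarrow> bool" where
  "quot_fuzzy_riesz_hom \<mu> A T \<longleftrightarrow>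
     (\<forall>x. T x \<in> quot A) \<and>
     (\<forall>x y. T (x + y) = qadd A (T x) (T y)) \<and>
     (\<forall>c x. T (c *\<^sub>R x) = qscale A c (T x)) \<and>
     (\<forall>x y. is_fsup_on (quot A) (quot_nu \<mu> A) {T x, T y} (T (fsup \<mu> x y)))"

end

theory Submission
  imports Defs
begin

text \<open>Linearity of the projection is immediate, since a coset does not depend on the
representative chosen. Because \<open>\<nu>\<close> dominates \<open>\<mu>\<close> on representatives, \<open>[x \<or> y]\<close> is an upper
bound of \<open>[x]\<close> and \<open>[y]\<close>. Conversely, if \<open>[u]\<close> is an upper bound, then \<open>x \<le> u + a\<close> and
\<open>y \<le> u + b\<close> for some \<open>a, b \<in> A\<close>; the ideal is solid, so \<open>c = |a| + |b| \<in> A\<close>, and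
\<open>c\<close> dominates both \<open>a\<close> and \<open>b\<close>. Hence \<open>x \<or> y \<le> u + c\<close>, i.e. \<open>[x \<or> y] \<le> [u + c] = [u]\<close>.\<close>

context
  fixes \<mu> :: "'b \<Rightarrow> 'b \<Rightarrow> real"
  assumes order: "fuzzy_order_on UNIV \<mu>"
begin

lemma fle_refl: "fle \<mu> x x"
  using order unfolding fuzzy_order_on_def fle_def by auto

lemma fle_trans:
  assumes "fle \<mu> x y" "fle \<mu> y z"
  shows "fle \<mu> x z"
proof -
  have "min (\<mu> x y) (\<mu> y z) \<le> \<mu> x z"
    using order unfolding fuzzy_order_on_def by blast
  with assms show ?thesis
    unfolding fle_def by linarith
qed

lemma fle_antisym: "fle \<mu> x y \<Longrightarrow> fle \<mu> y x \<Longrightarrow> x = y"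
  using order unfolding fuzzy_order_on_def fle_def by force

lemma is_fsup_on_unique:
  "is_fsup_on S \<mu> X s \<Longrightarrow> is_fsup_on S \<mu> X t \<Longrightarrow> s = t"
  unfolding is_fsup_on_def by (meson fle_antisym)

end

lemma fuzzy_ordered_linear_space_order:
  "fuzzy_ordered_linear_space \<mu> \<Longrightarrow> fuzzy_order_on UNIV \<mu>"
  unfolding fuzzy_ordered_linear_space_def by blast

lemma fuzzy_riesz_space_ordered_linear:
  "fuzzy_riesz_space \<mu> \<Longrightarrow> fuzzy_ordered_linear_space \<mu>"
  unfolding fuzzy_riesz_space_def by blast

context
  fixes \<mu> :: "'a::real_vector \<Rightarrow> 'a \<Rightarrow> real"
  assumes ordered: "fuzzy_ordered_linear_space \<mu>"
begin

lemma fle_add_right: "fle \<mu> x y \<Longrightarrow> fle \<mu> (x + z) (y + z)"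
  using ordered unfolding fuzzy_ordered_linear_space_def fle_def
  by (meson less_le_trans)

lemma fle_scaleR: "fle \<mu> x y \<Longrightarrow> 0 < c \<Longrightarrow> fle \<mu> (c *\<^sub>R x) (c *\<^sub>R y)"
  using ordered unfolding fuzzy_ordered_linear_space_def fle_def
  by (meson less_le_trans)

lemma fle_add_left: "fle \<mu> x y \<Longrightarrow> fle \<mu> (z + x) (z + y)"
  using fle_add_right[of x y z] by (simp add: add.commute)

lemma fle_add:
  assumes "fle \<mu> x y" "fle \<mu> z w"
  shows "fle \<mu> (x + z) (y + w)"
proof -
  have "fle \<mu> (x + z) (y + z)"
    using fle_add_right[OF assms(1)] .
  moreover have "fle \<mu> (y + z) (y + w)"
    using fle_add_left[OF assms(2)] .
  ultimately show ?thesis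
    by (rule fle_trans[OF fuzzy_ordered_linear_space_order[OF ordered]])
qed

end

context
  fixes \<mu> :: "'a::real_vector \<Rightarrow> 'a \<Rightarrow> real"
  assumes riesz: "fuzzy_riesz_space \<mu>"
begin

private lemma ordered: "fuzzy_ordered_linear_space \<mu>"
  using fuzzy_riesz_space_ordered_linear[OF riesz] .

private lemma order: "fuzzy_order_on UNIV \<mu>"
  using fuzzy_ordered_linear_space_order[OF ordered] .

lemma fsup_is_fsup: "is_fsup_on UNIV \<mu> {x, y} (fsup \<mu> x y)"
proof -
  obtain s where s: "is_fsup_on UNIV \<mu> {x, y} s"
    using riesz unfolding fuzzy_riesz_space_def by blast
  then show ?thesis
    unfolding fsup_def by (rule theI) (rule is_fsup_on_unique[OF order _ s])
qed

lemma fsup_upper1: "fle \<mu> x (fsup \<mu> x y)"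
  and fsup_upper2: "fle \<mu> y (fsup \<mu> x y)"
  using fsup_is_fsup[of x y] unfolding is_fsup_on_def by blast+

lemma fsup_least: "fle \<mu> x u \<Longrightarrow> fle \<mu> y u \<Longrightarrow> fle \<mu> (fsup \<mu> x y) u"
  using fsup_is_fsup[of x y] unfolding is_fsup_on_def by blast

lemma fsup_eqI: "is_fsup_on UNIV \<mu> {x, y} s \<Longrightarrow> fsup \<mu> x y = s"
  using is_fsup_on_unique[OF order fsup_is_fsup] .

lemma fabs_ge: "fle \<mu> x (fabs \<mu> x)"
  unfolding fabs_def by (rule fsup_upper1)

lemma fabs_nonneg: "fle \<mu> 0 (fabs \<mu> x)"
proof -
  let ?b = "fabs \<mu> x"
  have "fle \<mu> (x + - x) (?b + ?b)"
    unfolding fabs_def by (rule fle_add[OF ordered fsup_upper1 fsup_upper2])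
  then have "fle \<mu> ((1/2::real) *\<^sub>R 0) ((1/2::real) *\<^sub>R (?b + ?b))"
    by (intro fle_scaleR[OF ordered]) simp_all
  moreover have "(1/2::real) *\<^sub>R (?b + ?b) = ?b"
    by (simp flip: scaleR_2)
  ultimately show ?thesis by simp
qed

lemma fabs_fabs: "fabs \<mu> (fabs \<mu> x) = fabs \<mu> x"
proof -
  let ?b = "fabs \<mu> x"
  have "fle \<mu> (0 + - ?b) (?b + - ?b)"
    by (rule fle_add_right[OF ordered fabs_nonneg])
  then have "fle \<mu> (- ?b) ?b"
    using fle_trans[OF order _ fabs_nonneg] by simp
  then have "is_fsup_on UNIV \<mu> {?b, - ?b} ?b"
    unfolding is_fsup_on_def using fle_refl[OF order] by blast
  then show ?thesis
    unfolding fabs_def[of \<mu> ?b] by (rule fsup_eqI)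
qed

lemma fle_fabs_add_left: "fle \<mu> x (fabs \<mu> x + fabs \<mu> y)"
  using fle_add[OF ordered fabs_ge[of x] fabs_nonneg[of y]] by simp

lemma fle_fabs_add_right: "fle \<mu> y (fabs \<mu> x + fabs \<mu> y)"
  using fle_add[OF ordered fabs_nonneg[of x] fabs_ge[of y]] by simp

lemma fuzzy_ideal_fabs_mem:
  assumes "fuzzy_ideal \<mu> A" "a \<in> A"
  shows "fabs \<mu> a \<in> A"
proof -
  have "1/2 < \<mu> (fabs \<mu> (fabs \<mu> a)) (fabs \<mu> a)"
    using fle_refl[OF order] unfolding fabs_fabs fle_def .
  with assms show ?thesis
    unfolding fuzzy_ideal_def by blast
qed

end

lemma fuzzy_ideal_subspace: "fuzzy_ideal \<mu> A \<Longrightarrow> subspace A"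
  unfolding fuzzy_ideal_def by blast

lemma mem_coset_iff: "z \<in> coset A f \<longleftrightarrow> (\<exists>a\<in>A. z = f + a)"
  unfolding coset_def by auto

lemma coset_self: "subspace A \<Longrightarrow> f \<in> coset A f"
  unfolding mem_coset_iff using subspace_0 by force

lemma coset_add_mem:
  assumes "subspace A" "d \<in> A"
  shows "coset A (f + d) = coset A f"
proof (intro set_eqI iffI)
  fix z assume "z \<in> coset A (f + d)"
  then obtain a where "a \<in> A" "z = f + (d + a)"
    by (auto simp: mem_coset_iff add.assoc)
  then show "z \<in> coset A f"
    using subspace_add[OF assms] by (auto simp: mem_coset_iff)
next
  fix z assume "z \<in> coset A f"
  then obtain a where "a \<in> A" "z = f + a"
    by (auto simp: mem_coset_iff)
  then have "a - d \<in> A" "z = (f + d) + (a - d)"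
    using subspace_diff[OF assms(1) _ assms(2)] by auto
  then show "z \<in> coset A (f + d)"
    unfolding mem_coset_iff by blast
qed

lemma coset_eq_iff:
  assumes "subspace A"
  shows "coset A f = coset A g \<longleftrightarrow> (\<exists>a\<in>A. f = g + a)"
proof
  assume "coset A f = coset A g"
  then show "\<exists>a\<in>A. f = g + a"
    using coset_self[OF assms, of f] by (simp add: mem_coset_iff)
next
  assume "\<exists>a\<in>A. f = g + a"
  then obtain a where "a \<in> A" "f = g + a"
    by blast
  then show "coset A f = coset A g"
    using coset_add_mem[OF assms \<open>a \<in> A\<close>] by simp
qed

lemma rep_coset:
  assumes "subspace A"
  shows "\<exists>a\<in>A. rep (coset A f) = f + a"
proof -
  have "rep (coset A f) \<in> coset A f"
    unfolding rep_def using coset_self[OF assms] by (rule someI)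
  then show ?thesis
    by (simp add: mem_coset_iff)
qed

lemma qadd_coset:
  assumes "subspace A"
  shows "qadd A (coset A x) (coset A y) = coset A (x + y)"
proof -
  obtain a b where "a \<in> A" "rep (coset A x) = x + a" "b \<in> A" "rep (coset A y) = y + b"
    using rep_coset[OF assms, of x] rep_coset[OF assms, of y] by blast
  then have "qadd A (coset A x) (coset A y) = coset A ((x + y) + (a + b))"
    unfolding qadd_def by (simp add: algebra_simps)
  also have "\<dots> = coset A (x + y)"
    using coset_add_mem[OF assms subspace_add[OF assms \<open>a \<in> A\<close> \<open>b \<in> A\<close>]] .
  finally show ?thesis .
qed

lemma qscale_coset:
  assumes "subspace A"
  shows "qscale A c (coset A x) = coset A (c *\<^sub>R x)"
proof -
  obtain a where "a \<in> A" "rep (coset A x) = x + a"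
    using rep_coset[OF assms] by blast
  then have "qscale A c (coset A x) = coset A (c *\<^sub>R x + c *\<^sub>R a)"
    unfolding qscale_def by (simp add: scaleR_add_right)
  also have "\<dots> = coset A (c *\<^sub>R x)"
    using coset_add_mem[OF assms subspace_scale[OF assms \<open>a \<in> A\<close>]] .
  finally show ?thesis .
qed

lemma fle_quot_nu_cosetI:
  "subspace A \<Longrightarrow> fle \<mu> x y \<Longrightarrow> fle (quot_nu \<mu> A) (coset A x) (coset A y)"
  using coset_self[of A x] coset_self[of A y] unfolding fle_def quot_nu_def by auto

lemma fle_quot_nu_cosetD:
  assumes ordered: "fuzzy_ordered_linear_space \<mu>" and "subspace A"
    and le: "fle (quot_nu \<mu> A) (coset A x) (coset A u)"
  shows "\<exists>a\<in>A. fle \<mu> x (u + a)"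
proof (cases "coset A x = coset A u")
  case True
  then obtain a where "a \<in> A" "x = u + a"
    using coset_eq_iff[OF \<open>subspace A\<close>] by blast
  then show ?thesis
    using fle_refl[OF fuzzy_ordered_linear_space_order[OF ordered]] by blast
next
  case False
  with le have "\<exists>f1\<in>coset A x. \<exists>g1\<in>coset A u. fle \<mu> f1 g1"
    unfolding fle_def quot_nu_def by (simp split: if_split_asm)
  then obtain a b where "a \<in> A" "b \<in> A" "fle \<mu> (x + a) (u + b)"
    by (auto simp: mem_coset_iff)
  then have "fle \<mu> x (u + (b - a))" "b - a \<in> A"
    using fle_add_right[OF ordered, of "x + a" "u + b" "- a"] subspace_diff[OF \<open>subspace A\<close>]
    by (simp_all add: algebra_simps)
  then show ?thesis
    by blast
qed

lemma coset_fsup_is_fsup: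
  assumes riesz: "fuzzy_riesz_space \<mu>" and ideal: "fuzzy_ideal \<mu> A"
  shows "is_fsup_on (quot A) (quot_nu \<mu> A) {coset A x, coset A y} (coset A (fsup \<mu> x y))"
proof -
  have A: "subspace A"
    using fuzzy_ideal_subspace[OF ideal] .
  have ordered: "fuzzy_ordered_linear_space \<mu>"
    using fuzzy_riesz_space_ordered_linear[OF riesz] .
  have order: "fuzzy_order_on UNIV \<mu>"
    using fuzzy_ordered_linear_space_order[OF ordered] .
  have "fle (quot_nu \<mu> A) (coset A (fsup \<mu> x y)) (coset A u)"
    if ux: "fle (quot_nu \<mu> A) (coset A x) (coset A u)"
      and uy: "fle (quot_nu \<mu> A) (coset A y) (coset A u)" for u
  proof -
    obtain a b where "a \<in> A" "fle \<mu> x (u + a)" "b \<in> A" "fle \<mu> y (u + b)"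
      using fle_quot_nu_cosetD[OF ordered A ux] fle_quot_nu_cosetD[OF ordered A uy]
      by blast
    define c where "c = fabs \<mu> a + fabs \<mu> b"
    have "c \<in> A"
      unfolding c_def
      using subspace_add[OF A] fuzzy_ideal_fabs_mem[OF riesz ideal] \<open>a \<in> A\<close> \<open>b \<in> A\<close> by blast
    have "fle \<mu> (u + a) (u + c)" "fle \<mu> (u + b) (u + c)"
      unfolding c_def using fle_fabs_add_left[OF riesz] fle_fabs_add_right[OF riesz]
      by (simp_all add: fle_add_left[OF ordered])
    then have "fle \<mu> x (u + c)" "fle \<mu> y (u + c)"
      using fle_trans[OF order] \<open>fle \<mu> x (u + a)\<close> \<open>fle \<mu> y (u + b)\<close> by blast+
    then have "fle (quot_nu \<mu> A) (coset A (fsup \<mu> x y)) (coset A (u + c))"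
      using fle_quot_nu_cosetI[OF A] fsup_least[OF riesz] by blast
    with \<open>c \<in> A\<close> show ?thesis
      by (simp add: coset_add_mem[OF A])
  qed
  then show ?thesis
    unfolding is_fsup_on_def quot_def
    using fle_quot_nu_cosetI[OF A] fsup_upper1[OF riesz] fsup_upper2[OF riesz] by auto
qed

theorem theorem3p6:
  fixes \<mu> :: "'a::real_vector \<Rightarrow> 'a \<Rightarrow> real" and A :: "'a set"
  assumes "fuzzy_riesz_space \<mu>"
    and "fuzzy_ideal \<mu> A"
  shows "quot_fuzzy_riesz_hom \<mu> A (coset A)"
proof -
  have "subspace A"
    using fuzzy_ideal_subspace[OF assms(2)] .
  then show ?thesis
    unfolding quot_fuzzy_riesz_hom_def
    using coset_fsup_is_fsup[OF assms] by (simp add: quot_def qadd_coset qscale_coset)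
qed

end
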